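(* Let $G$ be a directed graph without self-loops on vertex set $V=\{0,1,\dots,n-1\}$, $n\ge2$, with integer edge weights in $[-M,M]$, $M\ge1$. Let $H=100M$ and $L=\lceil\log_2 n\rceil$. Let $G'$ be the directed graph with vertices $u_A,u_B,u_C,u_D$ for each $u\in V$, a vertex $x$, and vertices $z_1,\dots,z_L,o_1,\dots,o_L$, and edges: for every edge $(u,v)$ of $G$, edges $(u_A,v_B),(u_B,v_C),(u_C,v_D)$ of weight $2H+w(u,v)$; for every $u\in V$, edges $(u_A,x)$ and $(x,u_D)$ of weight $3H$; for every $u\in V$ and $i\in\{1,\dots,L\}$, if the $i$-th bit of the binary representation of $u$ is $0$ then edges $(u_A,z_i)$ of weight $2H$ and $(o_i,u_D)$ of weight $3H$, and otherwise edges $(u_A,o_i)$ of weight $2H$ and $(z_i,u_D)$ of weight $3H$. Then the number of ordered pairs $(s,t)$ of distinct vertices of $G'$ other than $x$ such that some shortest $s$-to-$t$ path in $G'$ passes through $x$ equals $n$ minus the number of vertices of $G$ that lie on a negative-weight triangle.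
   Context: A negative-weight triangle in a directed graph is a triple of distinct vertices $u,v,t$ with edges $(u,v),(v,t),(t,u)$ whose weights sum to a negative number. *)

theory Defs
  imports Complex_Main
begin

type_synonym ('v) wedge = "'v \<times> int \<times> 'v"

definition etail :: "'v wedge \<Rightarrow> 'v" where "etail e = fst e"
definition ewt :: "'v wedge \<Rightarrow> int" where "ewt e = fst (snd e)"
definition ehead :: "'v wedge \<Rightarrow> 'v" where "ehead e = snd (snd e)"

definition is_path :: "'v wedge set \<Rightarrow> 'v \<Rightarrow> 'v \<Rightarrow> 'v wedge list \<Rightarrow> bool" where
  "is_path E s t p \<longleftrightarrow>
     p \<noteq> [] \<and> set p \<subseteq> E \<and> etail (hd p) = s \<and> ehead (last p) = t \<and>
     (\<forall>i. Suc i < length p \<longrightarrow> ehead (p ! i) = etail (p ! Suc i)) \<and>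
     distinct (s # map ehead p)"

definition path_weight :: "'v wedge list \<Rightarrow> int" where
  "path_weight p = sum_list (map ewt p)"

definition is_shortest_path :: "'v wedge set \<Rightarrow> 'v \<Rightarrow> 'v \<Rightarrow> 'v wedge list \<Rightarrow> bool" where
  "is_shortest_path E s t p \<longleftrightarrow>
     is_path E s t p \<and> (\<forall>q. is_path E s t q \<longrightarrow> path_weight p \<le> path_weight q)"

definition interior_verts :: "'v wedge list \<Rightarrow> 'v set" where
  "interior_verts p = set (map ehead (butlast p))"

definition on_neg_triangle :: "(nat \<times> nat) set \<Rightarrow> (nat \<times> nat \<Rightarrow> int) \<Rightarrow> nat \<Rightarrow> bool" where
  "on_neg_triangle E w u \<longleftrightarrow>
     (\<exists>v t. u \<noteq> v \<and> v \<noteq> t \<and> t \<noteq> u \<and> (u, v) \<in> E \<and> (v, t) \<in> E \<and> (t, u) \<in> E \<and>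
            w (u, v) + w (v, t) + w (t, u) < 0)"

datatype vert = VA nat | VB nat | VC nat | VD nat | VX | VZ nat | VO nat

(* i-th bit (i \<ge> 1, least significant bit is bit 1) of the binary representation of u *)
definition bit_i :: "nat \<Rightarrow> nat \<Rightarrow> bool" where
  "bit_i u i = odd (u div 2 ^ (i - 1))"

definition logL :: "nat \<Rightarrow> nat" where
  "logL n = nat \<lceil>log 2 (real n)\<rceil>"

definition verts' :: "nat \<Rightarrow> vert set" where
  "verts' n = VA ` {0..<n} \<union> VB ` {0..<n} \<union> VC ` {0..<n} \<union> VD ` {0..<n} \<union> {VX}
             \<union> VZ ` {1..logL n} \<union> VO ` {1..logL n}"

definition edges' :: "nat \<Rightarrow> int \<Rightarrow> (nat \<times> nat) set \<Rightarrow> (nat \<times> nat \<Rightarrow> int) \<Rightarrow> vert wedge set" where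
  "edges' n M E w =
     (let H = 100 * M; L = logL n in
       {(VA u, 2*H + w (u,v), VB v) | u v. (u,v) \<in> E}
     \<union> {(VB u, 2*H + w (u,v), VC v) | u v. (u,v) \<in> E}
     \<union> {(VC u, 2*H + w (u,v), VD v) | u v. (u,v) \<in> E}
     \<union> {(VA u, 3*H, VX) | u. u < n}
     \<union> {(VX, 3*H, VD u) | u. u < n}
     \<union> {(VA u, 2*H, VZ i) | u i. u < n \<and> 1 \<le> i \<and> i \<le> L \<and> \<not> bit_i u i}
     \<union> {(VO i, 3*H, VD u) | u i. u < n \<and> 1 \<le> i \<and> i \<le> L \<and> \<not> bit_i u i}
     \<union> {(VA u, 2*H, VO i) | u i. u < n \<and> 1 \<le> i \<and> i \<le> L \<and> bit_i u i}
     \<union> {(VZ i, 3*H, VD u) | u i. u < n \<and> 1 \<le> i \<and> i \<le> L \<and> bit_i u i})"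

end

theory Submission
  imports Defs
begin

text \<open>
  In G' the vertex x has only A-vertices as in-neighbours, which have no in-edges, and only
  D-vertices as out-neighbours, which have no out-edges; so a path through x is u_A, x, v_D and
  weighs 6H. If u \<noteq> v, a bit i separating u and v gives the path u_A, z_i or o_i, v_D of weight 5H,
  so only the n pairs (u_A, u_D) can qualify. The bit gadget never joins u_A to u_D, so the only
  other u_A-u_D paths are u_A, a_B, b_C, u_D, of weight 6H + w(u,a) + w(a,b) + w(b,u). Hence x lies
  on a shortest u_A-u_D path iff u lies on no negative triangle. The comparisons are exact.
\<close>

fun walk :: "'v wedge set \<Rightarrow> 'v \<Rightarrow> 'v \<Rightarrow> 'v wedge list \<Rightarrow> bool" where
  "walk E s t [] \<longleftrightarrow> s = t"
| "walk E s t ((a, k, c) # p) \<longleftrightarrow> (a, k, c) \<in> E \<and> a = s \<and> walk E c t p"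

lemma walk_Cons_iff:
  "walk E s t (e # p) \<longleftrightarrow> e \<in> E \<and> etail e = s \<and> walk E (ehead e) t p"
  by (cases e) (simp add: etail_def ehead_def)

lemma walk_iff_chain:
  "p \<noteq> [] \<Longrightarrow> walk E s t p \<longleftrightarrow> set p \<subseteq> E \<and> etail (hd p) = s \<and> ehead (last p) = t \<and>
     (\<forall>i. Suc i < length p \<longrightarrow> ehead (p ! i) = etail (p ! Suc i))"
proof (induction p arbitrary: s)
  case Nil
  then show ?case by simp
next
  case (Cons e p)
  show ?case
  proof (cases "p = []")
    case True
    then show ?thesis by (simp add: walk_Cons_iff)
  next
    case False
    have "(\<forall>i. Suc i < length (e # p) \<longrightarrow> ehead ((e # p) ! i) = etail ((e # p) ! Suc i)) \<longleftrightarrow>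
          ehead e = etail (hd p) \<and> (\<forall>i. Suc i < length p \<longrightarrow> ehead (p ! i) = etail (p ! Suc i))"
      using False by (auto simp: hd_conv_nth nth_Cons split: nat.split)
    then show ?thesis using Cons.IH[OF False] False by (auto simp: walk_Cons_iff)
  qed
qed

lemma is_path_iff_walk:
  "is_path E s t p \<longleftrightarrow> p \<noteq> [] \<and> walk E s t p \<and> distinct (s # map ehead p)"
  unfolding is_path_def using walk_iff_chain by metis

lemma walk_from_sink:
  assumes "\<And>k c. (s, k, c) \<notin> E" and "walk E s t p"
  shows "p = [] \<and> t = s"
  using assms by (cases p) (auto simp: walk_Cons_iff etail_def)

lemma walk_append: "walk E s t (p @ q) \<longleftrightarrow> (\<exists>m. walk E s m p \<and> walk E m t q)"
  by (induction p arbitrary: s) (auto simp: walk_Cons_iff)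

lemma walk_to_source:
  assumes "\<And>a k. (a, k, t) \<notin> E" and "walk E s t p"
  shows "p = [] \<and> s = t"
  using assms by (cases p rule: rev_exhaust) (auto simp: walk_append ehead_def walk_Cons_iff)

lemma path_weight_simps [simp]:
  "path_weight [] = 0" "path_weight ((a, k, c) # p) = k + path_weight p"
  by (simp_all add: path_weight_def ewt_def)

lemma le_two_pow_logL: "n \<ge> 1 \<Longrightarrow> n \<le> 2 ^ logL n"
proof -
  assume n: "n \<ge> 1"
  have "log 2 (real n) \<le> real (logL n)"
    unfolding logL_def using n by (simp add: of_nat_nat)
  then have "real n \<le> 2 ^ logL n"
    using n by (simp add: log_le_iff powr_realpow)
  then show ?thesis
    by (metis of_nat_le_iff of_nat_numeral of_nat_power)
qed

lemma bit_i_distinguishes: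
  assumes "u \<noteq> v" "u < 2 ^ L" "v < 2 ^ L"
  obtains i where "1 \<le> i" "i \<le> L" "bit_i u i \<noteq> bit_i v i"
proof -
  have "\<exists>j<L. bit u j \<noteq> bit v j"
  proof (rule ccontr)
    assume "\<not> ?thesis"
    moreover have "bit u j = bit v j" if "L \<le> j" for j
    proof -
      have "(2::nat) ^ L \<le> 2 ^ j" using that by simp
      then have "u < 2 ^ j" "v < 2 ^ j" using assms by linarith+
      then show ?thesis by (simp add: bit_iff_odd)
    qed
    ultimately have "u = v" by (metis bit_eq_iff not_le)
    with assms(1) show False ..
  qed
  then obtain j where "j < L" "bit u j \<noteq> bit v j" by blast
  then show thesis by (intro that[of "Suc j"]) (auto simp: bit_i_def bit_iff_odd)
qed

lemma edges'_into_VA: "(a, k, VA u) \<notin> edges' n M E w"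
  and edges'_from_VD: "(VD u, k, c) \<notin> edges' n M E w"
  unfolding edges'_def Let_def by auto

lemma edges'_into_VX: "(a, k, VX) \<in> edges' n M E w \<longleftrightarrow> (\<exists>u. u < n \<and> a = VA u \<and> k = 300 * M)"
  unfolding edges'_def Let_def by auto

lemma edges'_from_VA:
  "(VA u, k, c) \<in> edges' n M E w \<longleftrightarrow>
     (\<exists>a. (u, a) \<in> E \<and> k = 200 * M + w (u, a) \<and> c = VB a)
   \<or> (u < n \<and> k = 300 * M \<and> c = VX)
   \<or> (\<exists>i. u < n \<and> 1 \<le> i \<and> i \<le> logL n \<and> \<not> bit_i u i \<and> k = 200 * M \<and> c = VZ i)
   \<or> (\<exists>i. u < n \<and> 1 \<le> i \<and> i \<le> logL n \<and> bit_i u i \<and> k = 200 * M \<and> c = VO i)"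
  unfolding edges'_def Let_def by auto

lemma edges'_from_VB:
  "(VB a, k, c) \<in> edges' n M E w \<longleftrightarrow> (\<exists>b. (a, b) \<in> E \<and> k = 200 * M + w (a, b) \<and> c = VC b)"
  and edges'_from_VC:
  "(VC b, k, c) \<in> edges' n M E w \<longleftrightarrow> (\<exists>u. (b, u) \<in> E \<and> k = 200 * M + w (b, u) \<and> c = VD u)"
  and edges'_from_VX:
  "(VX, k, c) \<in> edges' n M E w \<longleftrightarrow> (\<exists>u. u < n \<and> k = 300 * M \<and> c = VD u)"
  and edges'_from_VZ:
  "(VZ i, k, c) \<in> edges' n M E w \<longleftrightarrow>
     (\<exists>u. u < n \<and> 1 \<le> i \<and> i \<le> logL n \<and> bit_i u i \<and> k = 300 * M \<and> c = VD u)"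
  and edges'_from_VO:
  "(VO i, k, c) \<in> edges' n M E w \<longleftrightarrow>
     (\<exists>u. u < n \<and> 1 \<le> i \<and> i \<le> logL n \<and> \<not> bit_i u i \<and> k = 300 * M \<and> c = VD u)"
  unfolding edges'_def Let_def by auto

lemma walk_from_VD: "walk (edges' n M E w) (VD v) t p \<Longrightarrow> p = [] \<and> t = VD v"
  by (rule walk_from_sink) (simp_all add: edges'_from_VD)

lemma walk_from_VC_to_VD:
  "walk (edges' n M E w) (VC b) (VD u) p \<Longrightarrow> (b, u) \<in> E \<and> path_weight p = 200 * M + w (b, u)"
  by (cases p) (auto simp: edges'_from_VC dest!: walk_from_VD)

lemma walk_from_VB_to_VD:
  "walk (edges' n M E w) (VB a) (VD u) p \<Longrightarrow>
     \<exists>b. (a, b) \<in> E \<and> (b, u) \<in> E \<and> path_weight p = 400 * M + w (a, b) + w (b, u)"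
  by (cases p) (auto simp: edges'_from_VB dest!: walk_from_VC_to_VD, blast)

lemma walk_from_VZ_to_VD: "walk (edges' n M E w) (VZ i) (VD u) p \<Longrightarrow> bit_i u i"
  and walk_from_VO_to_VD: "walk (edges' n M E w) (VO i) (VD u) p \<Longrightarrow> \<not> bit_i u i"
  by (cases p; auto simp: edges'_from_VZ edges'_from_VO dest!: walk_from_VD)+

lemma walk_from_VX:
  "walk (edges' n M E w) VX t p \<Longrightarrow> p = [] \<and> t = VX \<or> (\<exists>v. v < n \<and> t = VD v \<and> p = [(VX, 300 * M, VD v)])"
  by (cases p) (auto simp: edges'_from_VX dest!: walk_from_VD)

lemma walk_through_VX:
  assumes "walk (edges' n M E w) s t p" and "VX \<in> interior_verts p"
  shows "\<exists>u v. u < n \<and> v < n \<and> s = VA u \<and> t = VD v \<and> p = [(VA u, 300 * M, VX), (VX, 300 * M, VD v)]"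
proof -
  from assms(2) obtain e where "e \<in> set (butlast p)" and "ehead e = VX"
    by (auto simp: interior_verts_def)
  moreover obtain a k where "e = (a, k, VX)"
    using \<open>ehead e = VX\<close> by (cases e) (simp add: ehead_def)
  ultimately obtain xs ys where "butlast p = xs @ (a, k, VX) # ys"
    by (meson split_list)
  then obtain zs where p: "p = xs @ (a, k, VX) # zs" and "zs \<noteq> []"
    by (metis append.assoc append_Cons append_butlast_last_id butlast.simps(1) list.distinct(1) snoc_eq_iff_butlast)
  obtain m where xs: "walk (edges' n M E w) s m xs" and "m = a" and "(a, k, VX) \<in> edges' n M E w"
    and zs: "walk (edges' n M E w) VX t zs"
    using assms(1) unfolding p walk_append by auto
  then obtain u where u: "u < n" "a = VA u" "k = 300 * M"
    by (auto simp: edges'_into_VX)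
  have "xs = [] \<and> s = VA u"
    using walk_to_source[OF edges'_into_VA xs[unfolded \<open>m = a\<close> u(2)]] by simp
  moreover obtain v where "v < n" "t = VD v" "zs = [(VX, 300 * M, VD v)]"
    using walk_from_VX[OF zs] \<open>zs \<noteq> []\<close> by blast
  ultimately show ?thesis
    using p u by auto
qed

lemma walk_VA_VD_weight:
  assumes "walk (edges' n M E w) (VA u) (VD u) p"
  shows "path_weight p = 600 * M \<or>
    (\<exists>a b. (u, a) \<in> E \<and> (a, b) \<in> E \<and> (b, u) \<in> E \<and> path_weight p = 600 * M + w (u, a) + w (a, b) + w (b, u))"
proof -
  obtain e q where "p = e # q"
    using assms by (cases p) auto
  moreover obtain a k c where "e = (a, k, c)"
    by (cases e)
  ultimately have p: "p = (VA u, k, c) # q" and "(VA u, k, c) \<in> edges' n M E w"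
    and q: "walk (edges' n M E w) c (VD u) q"
    using assms by auto
  from this(2) consider (B) a where "(u, a) \<in> E" "k = 200 * M + w (u, a)" "c = VB a"
    | (X) "k = 300 * M" "c = VX"
    | (Z) i where "\<not> bit_i u i" "c = VZ i"
    | (O) i where "bit_i u i" "c = VO i"
    by (auto simp: edges'_from_VA)
  then show ?thesis
  proof cases
    case (B a)
    obtain b where "(a, b) \<in> E" "(b, u) \<in> E" "path_weight q = 400 * M + w (a, b) + w (b, u)"
      using walk_from_VB_to_VD[OF q[unfolded B(3)]] by blast
    moreover from this have "path_weight p = 600 * M + w (u, a) + w (a, b) + w (b, u)"
      using p B by simp
    ultimately show ?thesis
      using B by blast
  next
    case X
    then show ?thesis
      using p walk_from_VX[OF q[unfolded X(2)]] by auto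
  next
    case (Z i)
    with walk_from_VZ_to_VD[OF q[unfolded Z(2)]] show ?thesis
      by blast
  next
    case (O i)
    with walk_from_VO_to_VD[OF q[unfolded O(2)]] show ?thesis
      by blast
  qed
qed

lemma is_path_via_VX:
  "u < n \<Longrightarrow> v < n \<Longrightarrow> is_path (edges' n M E w) (VA u) (VD v) [(VA u, 300 * M, VX), (VX, 300 * M, VD v)]"
  by (simp add: is_path_iff_walk edges'_from_VA edges'_from_VX ehead_def)

lemma is_path_via_bit_gadget:
  assumes "u < n" "v < n" "u \<noteq> v"
  obtains q where "is_path (edges' n M E w) (VA u) (VD v) q" "path_weight q = 500 * M"
proof -
  have "n \<le> 2 ^ logL n"
    using assms(1) by (intro le_two_pow_logL) simp
  then have "u < 2 ^ logL n" "v < 2 ^ logL n"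
    using assms(1,2) by linarith+
  then obtain i where i: "1 \<le> i" "i \<le> logL n" "bit_i u i \<noteq> bit_i v i"
    using bit_i_distinguishes[OF assms(3)] by blast
  show thesis
  proof (cases "bit_i u i")
    case True
    with assms i have "is_path (edges' n M E w) (VA u) (VD v) [(VA u, 200 * M, VO i), (VO i, 300 * M, VD v)]"
      by (simp add: is_path_iff_walk edges'_from_VA edges'_from_VO ehead_def)
    then show thesis
      by (rule that) simp
  next
    case False
    with assms i have "is_path (edges' n M E w) (VA u) (VD v) [(VA u, 200 * M, VZ i), (VZ i, 300 * M, VD v)]"
      by (simp add: is_path_iff_walk edges'_from_VA edges'_from_VZ ehead_def)
    then show thesis
      by (rule that) simp
  qed
qed

lemma is_path_via_triangle:
  "(u, a) \<in> E \<Longrightarrow> (a, b) \<in> E \<Longrightarrow> (b, v) \<in> E \<Longrightarrow>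
   is_path (edges' n M E w) (VA u) (VD v)
     [(VA u, 200 * M + w (u, a), VB a), (VB a, 200 * M + w (a, b), VC b), (VC b, 200 * M + w (b, v), VD v)]"
  by (simp add: is_path_iff_walk edges'_from_VA edges'_from_VB edges'_from_VC ehead_def)

lemma shortest_path_through_VX_endpoints:
  assumes "M \<ge> 1"
    and p: "is_shortest_path (edges' n M E w) s t p" "VX \<in> interior_verts p"
  shows "\<exists>u. u < n \<and> s = VA u \<and> t = VD u \<and> \<not> on_neg_triangle E w u"
proof -
  have shortest: "path_weight p \<le> path_weight q" if "is_path (edges' n M E w) s t q" for q
    using p(1) that by (simp add: is_shortest_path_def)
  have "walk (edges' n M E w) s t p"
    using p(1) by (simp add: is_shortest_path_def is_path_iff_walk)
  then obtain u v where uv: "u < n" "v < n" "s = VA u" "t = VD v"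
    and "p = [(VA u, 300 * M, VX), (VX, 300 * M, VD v)]"
    using walk_through_VX p(2) by blast
  then have weight: "path_weight p = 600 * M"
    by simp
  have "u = v"
  proof (rule ccontr)
    assume "u \<noteq> v"
    then obtain q where "is_path (edges' n M E w) (VA u) (VD v) q" "path_weight q = 500 * M"
      using is_path_via_bit_gadget uv(1,2) by blast
    with shortest[of q] uv(3,4) weight \<open>M \<ge> 1\<close> show False
      by simp
  qed
  moreover have "\<not> on_neg_triangle E w u"
  proof
    assume "on_neg_triangle E w u"
    then obtain a b where ab: "(u, a) \<in> E" "(a, b) \<in> E" "(b, u) \<in> E"
      and negative: "w (u, a) + w (a, b) + w (b, u) < 0"
      unfolding on_neg_triangle_def by blast
    from is_path_via_triangle[OF ab, of n M w] have "is_path (edges' n M E w) s t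
      [(VA u, 200 * M + w (u, a), VB a), (VB a, 200 * M + w (a, b), VC b), (VC b, 200 * M + w (b, u), VD u)]"
      using uv \<open>u = v\<close> by simp
    from shortest[OF this] weight negative show False
      by simp
  qed
  ultimately show ?thesis
    using uv by blast
qed

lemma is_shortest_path_via_VX:
  assumes "\<forall>u. (u, u) \<notin> E" "u < n" "\<not> on_neg_triangle E w u"
  shows "is_shortest_path (edges' n M E w) (VA u) (VD u) [(VA u, 300 * M, VX), (VX, 300 * M, VD u)]"
  unfolding is_shortest_path_def
proof (intro conjI allI impI)
  show "is_path (edges' n M E w) (VA u) (VD u) [(VA u, 300 * M, VX), (VX, 300 * M, VD u)]"
    using assms(2) by (intro is_path_via_VX)
next
  fix q
  assume "is_path (edges' n M E w) (VA u) (VD u) q"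
  then have "walk (edges' n M E w) (VA u) (VD u) q"
    by (simp add: is_path_iff_walk)
  then consider "path_weight q = 600 * M"
    | a b where "(u, a) \<in> E" "(a, b) \<in> E" "(b, u) \<in> E"
        "path_weight q = 600 * M + w (u, a) + w (a, b) + w (b, u)"
    using walk_VA_VD_weight by blast
  then show "path_weight [(VA u, 300 * M, VX), (VX, 300 * M, VD u)] \<le> path_weight q"
  proof cases
    case (2 a b)
    moreover from this have "u \<noteq> a" "a \<noteq> b" "b \<noteq> u"
      using assms(1) by auto
    ultimately have "w (u, a) + w (a, b) + w (b, u) \<ge> 0"
      using assms(3) unfolding on_neg_triangle_def by (meson not_less)
    with 2 show ?thesis
      by simp
  qed simp
qed

lemma pairs_with_shortest_path_through_VX:
  assumes "M \<ge> 1" and "\<forall>u. (u, u) \<notin> E"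
  shows "{(s, t). s \<in> verts' n \<and> t \<in> verts' n \<and> s \<noteq> t \<and> s \<noteq> VX \<and> t \<noteq> VX \<and>
                 (\<exists>p. is_shortest_path (edges' n M E w) s t p \<and> VX \<in> interior_verts p)}
         = (\<lambda>u. (VA u, VD u)) ` ({0..<n} - {u \<in> {0..<n}. on_neg_triangle E w u})"
    (is "?S = _ ` ({0..<n} - ?T)")
proof (intro equalityI subsetI)
  fix st
  assume "st \<in> ?S"
  moreover obtain s t where st: "st = (s, t)"
    by (cases st)
  ultimately have "\<exists>p. is_shortest_path (edges' n M E w) s t p \<and> VX \<in> interior_verts p"
    by simp
  then obtain u where "u < n" "s = VA u" "t = VD u" "\<not> on_neg_triangle E w u"
    using shortest_path_through_VX_endpoints[OF assms(1)] by blast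
  then show "st \<in> (\<lambda>u. (VA u, VD u)) ` ({0..<n} - ?T)"
    unfolding st \<open>s = VA u\<close> \<open>t = VD u\<close> by (intro imageI) simp
next
  fix st
  assume "st \<in> (\<lambda>u. (VA u, VD u)) ` ({0..<n} - ?T)"
  then obtain u where st: "st = (VA u, VD u)" and "u \<in> {0..<n} - ?T"
    by (rule imageE)
  then have u: "u < n" "\<not> on_neg_triangle E w u"
    by simp_all
  have "is_shortest_path (edges' n M E w) (VA u) (VD u) [(VA u, 300 * M, VX), (VX, 300 * M, VD u)]"
    using is_shortest_path_via_VX[OF assms(2) u] .
  moreover have "VX \<in> interior_verts [(VA u, 300 * M, VX), (VX, 300 * M, VD u)]"
    by (simp add: interior_verts_def ehead_def)
  moreover have "VA u \<in> verts' n" "VD u \<in> verts' n"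
    using u(1) by (simp_all add: verts'_def)
  ultimately show "st \<in> ?S"
    unfolding st by auto
qed

theorem mainTheorem10:
  fixes n :: nat and M :: int and E :: "(nat \<times> nat) set" and w :: "nat \<times> nat \<Rightarrow> int"
  assumes "n \<ge> 2" and "M \<ge> 1"
    and "E \<subseteq> {0..<n} \<times> {0..<n}"
    and "\<forall>u. (u, u) \<notin> E"
    and "\<forall>e\<in>E. - M \<le> w e \<and> w e \<le> M"
  shows "card {(s, t). s \<in> verts' n \<and> t \<in> verts' n \<and> s \<noteq> t \<and> s \<noteq> VX \<and> t \<noteq> VX \<and>
                 (\<exists>p. is_shortest_path (edges' n M E w) s t p \<and> VX \<in> interior_verts p)}
         = n - card {u \<in> {0..<n}. on_neg_triangle E w u}"
    (is "card ?S = n - card ?T")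
proof -
  have "card ?S = card ({0..<n} - ?T)"
    unfolding pairs_with_shortest_path_through_VX[OF assms(2,4)] by (simp add: card_image inj_on_def)
  also have "\<dots> = n - card ?T"
    by (subst card_Diff_subset) auto
  finally show ?thesis .
qed

end
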